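(* Let $H$ be a complex Hilbert space and let $A$ and $B$ be densely defined symmetric operators in $H$ with $D(A)=D(B)$. If $A+iB\subset 0$ (i.e. $Ax+iBx=0$ for all $x\in D(A)=D(B)$), then $A\subset 0$ and $B\subset 0$ (i.e. $A$ and $B$ vanish on their domain). If moreover $A$ (or $B$) is closed, then $A=B=0$ everywhere on $H$.
   Context: A densely defined operator $S$ is symmetric if $S\subset S^*$. For operators $S,T$, $S\subset T$ means $D(S)\subset D(T)$ and $S=T$ on $D(S)$; $0$ denotes the zero operator defined on all of $H$. The sum $A+iB$ is defined on $D(A)\cap D(B)$. *)

theory Defs
  imports "HOL-Analysis.Analysis"
begin

class complex_vector = real_vector +
  fixes scaleC :: "complex \<Rightarrow> 'a \<Rightarrow> 'a" (infixr "*\<^sub>C" 75)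
  assumes scaleC_add_right: "a *\<^sub>C (x + y) = a *\<^sub>C x + a *\<^sub>C y"
    and scaleC_add_left: "(a + b) *\<^sub>C x = a *\<^sub>C x + b *\<^sub>C x"
    and scaleC_scaleC: "a *\<^sub>C (b *\<^sub>C x) = (a * b) *\<^sub>C x"
    and scaleC_one: "1 *\<^sub>C x = x"
    and scaleR_scaleC: "scaleR r x = complex_of_real r *\<^sub>C x"

class complex_inner = complex_vector + real_normed_vector +
  fixes cinner :: "'a \<Rightarrow> 'a \<Rightarrow> complex"
  assumes cinner_add_left: "cinner (x + y) z = cinner x z + cinner y z"
    and cinner_scaleC_left: "cinner (a *\<^sub>C x) y = a * cinner x y"
    and cinner_commute: "cinner x y = cnj (cinner y x)"
    and cinner_self_norm: "cinner x x = complex_of_real ((norm x)\<^sup>2)"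

class chilbert_space = complex_inner + complete_space

text \<open>A (possibly unbounded) linear operator is modelled by its domain D and a
function T; the values of T outside D are irrelevant.\<close>

definition csubspace :: "'a::complex_vector set \<Rightarrow> bool" where
  "csubspace D \<longleftrightarrow> 0 \<in> D \<and> (\<forall>x\<in>D. \<forall>y\<in>D. x + y \<in> D) \<and> (\<forall>c. \<forall>x\<in>D. c *\<^sub>C x \<in> D)"

definition linear_op :: "'a::complex_vector set \<Rightarrow> ('a \<Rightarrow> 'a) \<Rightarrow> bool" where
  "linear_op D T \<longleftrightarrow> csubspace D \<and>
     (\<forall>x\<in>D. \<forall>y\<in>D. T (x + y) = T x + T y) \<and> (\<forall>c. \<forall>x\<in>D. T (c *\<^sub>C x) = c *\<^sub>C T x)"

definition densely_defined :: "'a::complex_inner set \<Rightarrow> ('a \<Rightarrow> 'a) \<Rightarrow> bool" where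
  "densely_defined D T \<longleftrightarrow> linear_op D T \<and> closure D = UNIV"

definition adj_dom :: "'a::complex_inner set \<Rightarrow> ('a \<Rightarrow> 'a) \<Rightarrow> 'a set" where
  "adj_dom D T = {y. \<exists>z. \<forall>x\<in>D. cinner (T x) y = cinner x z}"

definition adj :: "'a::complex_inner set \<Rightarrow> ('a \<Rightarrow> 'a) \<Rightarrow> 'a \<Rightarrow> 'a" where
  "adj D T y = (THE z. \<forall>x\<in>D. cinner (T x) y = cinner x z)"

definition symmetric_op :: "'a::complex_inner set \<Rightarrow> ('a \<Rightarrow> 'a) \<Rightarrow> bool" where
  "symmetric_op D T \<longleftrightarrow> densely_defined D T \<and> D \<subseteq> adj_dom D T \<and>
     (\<forall>y\<in>D. adj D T y = T y)"

definition closed_op :: "'a::complex_inner set \<Rightarrow> ('a \<Rightarrow> 'a) \<Rightarrow> bool" where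
  "closed_op D T \<longleftrightarrow> closed {(x, T x) | x. x \<in> D}"

end

theory Submission
  imports Defs
begin

text \<open>For x, y in the domain, symmetry of A and B and the relation A = -iB give
  \<open>\<langle>Ax, y\<rangle> = -i\<langle>Bx, y\<rangle>\<close> as well as \<open>\<langle>Ax, y\<rangle> = \<langle>x, Ay\<rangle> = \<langle>x, -iBy\<rangle> = i\<langle>Bx, y\<rangle>\<close>,
  so \<open>\<langle>Bx, y\<rangle> = 0\<close>. Hence Bx is orthogonal to the dense domain, so Bx = 0 and
  Ax = -iBx = 0. A closed operator vanishing on its domain has the closed graph
  \<open>D \<times> {0}\<close>, so its domain is closed and dense, i.e. all of H.\<close>

lemma scaleC_zero_right [simp]: "a *\<^sub>C (0::'a::complex_vector) = 0"
  using scaleC_add_right[of a 0 0] by simp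

lemma cinner_add_right: "cinner (x::'a::complex_inner) (y + z) = cinner x y + cinner x z"
  by (metis cinner_add_left cinner_commute complex_cnj_add)

lemma cinner_scaleC_right: "cinner (x::'a::complex_inner) (c *\<^sub>C y) = cnj c * cinner x y"
  by (metis cinner_scaleC_left cinner_commute complex_cnj_mult complex_cnj_cnj)

lemma cinner_zero_left [simp]: "cinner (0::'a::complex_inner) y = 0"
  by (metis add_0 add_cancel_left_left cinner_add_left)

lemma cinner_zero_right [simp]: "cinner (x::'a::complex_inner) 0 = 0"
  by (metis cinner_commute cinner_zero_left complex_cnj_zero)

lemma Re_cinner_self: "Re (cinner x x) = (norm (x::'a::complex_inner))\<^sup>2"
  by (simp add: cinner_self_norm)

lemma norm_add_square:
  "(norm ((x::'a::complex_inner) + y))\<^sup>2 = (norm x)\<^sup>2 + (norm y)\<^sup>2 + 2 * Re (cinner x y)"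
proof -
  have "(norm (x + y))\<^sup>2 = Re (cinner (x + y) (x + y))"
    by (simp add: Re_cinner_self)
  also have "\<dots> = Re (cinner x x + cinner x y + cnj (cinner x y) + cinner y y)"
    by (simp add: cinner_add_left cinner_add_right cinner_commute[of y x])
  finally show ?thesis
    by (simp add: Re_cinner_self)
qed

lemma orthogonal_to_dense_eq_0:
  fixes D :: "'a::complex_inner set"
  assumes dense: "closure D = UNIV" and orth: "\<forall>x\<in>D. cinner x y = 0"
  shows "y = 0"
proof -
  let ?S = "{x. Re (cinner x y) = 0}"
  \<comment> \<open>The class axioms do not make \<open>cinner\<close> continuous; closedness of ?S comes from
    expressing \<open>Re (cinner x y)\<close> through norms.\<close>
  have "?S = {x. (norm (x + y))\<^sup>2 - (norm x)\<^sup>2 - (norm y)\<^sup>2 = 0}"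
    by (simp add: norm_add_square)
  then have "closed ?S"
    by (simp add: closed_Collect_eq continuous_intros)
  moreover have "D \<subseteq> ?S"
    using orth by auto
  ultimately have "closure D \<subseteq> ?S"
    by (rule closure_minimal[rotated])
  then have "Re (cinner y y) = 0"
    using dense by blast
  then show "y = 0"
    by (simp add: Re_cinner_self)
qed

lemma symmetric_op_dense: "symmetric_op D T \<Longrightarrow> closure D = UNIV"
  by (simp add: symmetric_op_def densely_defined_def)

lemma adj_eqI:
  assumes dense: "closure D = UNIV"
    and z: "\<forall>x\<in>D. cinner (T x) y = cinner x z"
  shows "adj D T y = z"
  unfolding adj_def
proof (rule the_equality)
  fix z' assume z': "\<forall>x\<in>D. cinner (T x) y = cinner x z'"
  have "cinner x (z' - z) = 0" if "x \<in> D" for x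
    using z z' that cinner_add_right[of x "z' - z" z] by simp
  then have "z' - z = 0"
    using orthogonal_to_dense_eq_0[OF dense] by blast
  then show "z' = z"
    by simp
qed (use z in simp)

lemma symmetric_op_cinner:
  assumes sym: "symmetric_op D T" and "x \<in> D" "y \<in> D"
  shows "cinner (T x) y = cinner x (T y)"
proof -
  from sym \<open>y \<in> D\<close> obtain z where z: "\<forall>u\<in>D. cinner (T u) y = cinner u z"
    unfolding symmetric_op_def adj_dom_def by blast
  have "T y = adj D T y"
    using sym \<open>y \<in> D\<close> by (simp add: symmetric_op_def)
  also have "\<dots> = z"
    using adj_eqI[OF symmetric_op_dense[OF sym] z] .
  finally show ?thesis
    using z \<open>x \<in> D\<close> by simp
qed

lemma symmetric_ops_vanish_if_sum_i_vanishes: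
  assumes symA: "symmetric_op D A" and symB: "symmetric_op D B"
    and sum0: "\<forall>x\<in>D. A x + \<i> *\<^sub>C B x = 0" and "x \<in> D"
  shows "A x = 0 \<and> B x = 0"
proof -
  have "cinner y (B x) = 0" if "y \<in> D" for y
  proof -
    have "cinner (A x) y = - \<i> * cinner (B x) y"
      using sum0 \<open>x \<in> D\<close> cinner_add_left[of "A x" "\<i> *\<^sub>C B x" y]
      by (simp add: cinner_scaleC_left eq_neg_iff_add_eq_0)
    moreover have "cinner (A x) y = \<i> * cinner (B x) y"
    proof -
      have "cinner (A x) y = cinner x (A y)"
        using symmetric_op_cinner[OF symA \<open>x \<in> D\<close> \<open>y \<in> D\<close>] .
      also have "\<dots> = - cnj \<i> * cinner x (B y)"
        using sum0 \<open>y \<in> D\<close> cinner_add_right[of x "A y" "\<i> *\<^sub>C B y"]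
        by (simp add: cinner_scaleC_right eq_neg_iff_add_eq_0)
      also have "\<dots> = \<i> * cinner (B x) y"
        using symmetric_op_cinner[OF symB \<open>x \<in> D\<close> \<open>y \<in> D\<close>] by simp
      finally show ?thesis .
    qed
    ultimately have "cinner (B x) y = 0"
      by simp
    then show ?thesis
      by (metis cinner_commute complex_cnj_zero)
  qed
  then have "B x = 0"
    using orthogonal_to_dense_eq_0[OF symmetric_op_dense[OF symB]] by blast
  moreover have "A x = 0"
    using sum0 \<open>x \<in> D\<close> \<open>B x = 0\<close> by fastforce
  ultimately show ?thesis
    by simp
qed

lemma closed_op_vanishing_dense_domain_UNIV:
  assumes closed: "closed_op D T" and vanish: "\<forall>x\<in>D. T x = 0" and dense: "closure D = UNIV"
  shows "D = UNIV"
proof -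
  have "D = (\<lambda>x. (x, 0)) -` {(x, T x) | x. x \<in> D}"
    using vanish by auto
  moreover have "closed ((\<lambda>x. (x, 0)) -` {(x, T x) | x. x \<in> D})"
    using closed unfolding closed_op_def
    by (rule continuous_closed_vimage) (intro continuous_intros)
  ultimately show ?thesis
    using dense closure_closed by metis
qed

theorem proposition2p6:
  fixes D :: "'a::chilbert_space set" and A B :: "'a \<Rightarrow> 'a"
  assumes symA: "symmetric_op D A"
    and symB: "symmetric_op D B"
    and sum0: "\<forall>x\<in>D. A x + \<i> *\<^sub>C B x = 0"
  shows "(\<forall>x\<in>D. A x = 0 \<and> B x = 0) \<and>
         ((closed_op D A \<or> closed_op D B) \<longrightarrow> D = UNIV \<and> (\<forall>x. A x = 0 \<and> B x = 0))"
proof -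
  have vanish: "\<forall>x\<in>D. A x = 0 \<and> B x = 0"
    using symmetric_ops_vanish_if_sum_i_vanishes[OF symA symB sum0] by blast
  moreover have "D = UNIV" if "closed_op D A \<or> closed_op D B"
    using that vanish symmetric_op_dense[OF symA]
      closed_op_vanishing_dense_domain_UNIV[of D A] closed_op_vanishing_dense_domain_UNIV[of D B]
    by blast
  ultimately show ?thesis
    by blast
qed

end
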